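(* Let $p\in\mathbb{C}\setminus\{0\}$ and let $M$ be a nontrivial conformal module over $\mathcal{B}(p)$ which is free of rank one as a $\mathbb{C}[\partial]$-module. (1) If $p\neq-1$, then $M\cong M_{\Delta,\alpha}$ for some $\Delta,\alpha\in\mathbb{C}$. (2) If $p=-1$, then $M\cong M_{\Delta,\alpha,\beta}$ for some $\Delta,\alpha,\beta\in\mathbb{C}$. Furthermore, $M_{\Delta,\alpha}$ (resp. $M_{\Delta,\alpha,\beta}$) is irreducible if and only if $\Delta\neq0$ (resp. $\Delta\ne0$ or $\beta\neq0$). The module $M_{0,\alpha}$ (resp. $M_{0,\alpha,0}$) contains a unique nontrivial submodule $(\partial+\alpha)M_{0,\alpha}$ (resp. $(\partial+\alpha)M_{0,\alpha,0}$), which is isomorphic to $M_{1,\alpha}$ (resp. $M_{1,\alpha,0}$).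
   Context: $\mathcal{B}(p)$ ($p\in\mathbb{C}$, $p\neq0$) is the Lie conformal algebra which is a free $\mathbb{C}[\partial]$-module with basis $\{L_i\mid i\in\mathbb{Z}_+\}$ ($\mathbb{Z}_+=\{0,1,2,\dots\}$) and $\lambda$-brackets $[L_i\,{}_\lambda\,L_j]=((i+p)\partial+(i+j+2p)\lambda)L_{i+j}$. A conformal module over $\mathcal{B}(p)$ is a $\mathbb{C}[\partial]$-module $M$ with a $\mathbb{C}$-linear $\lambda$-action $\mathcal{B}(p)\otimes M\to\mathbb{C}[\lambda]\otimes M$, $a\otimes v\mapsto a\,{}_\lambda\,v$, with $(\partial a)\,{}_\lambda\,v=-\lambda a\,{}_\lambda\,v$, $a\,{}_\lambda\,(\partial v)=(\partial+\lambda)a\,{}_\lambda\,v$, $[a\,{}_\lambda\,b]\,{}_{\lambda+\mu}\,v=a\,{}_\lambda\,(b\,{}_\mu\,v)-b\,{}_\mu\,(a\,{}_\lambda\,v)$; it is nontrivial if the $\lambda$-action is not identically zero. For $\Delta,\alpha\in\mathbb{C}$, $M_{\Delta,\alpha}=\mathbb{C}[\partial]v$ is the conformal $\mathcal{B}(p)$-module with $L_0\,{}_\lambda\,v=p(\partial+\Delta\lambda+\alpha)v$ and $L_i\,{}_\lambda\,v=0$ for $i\ge1$. For $p=-1$ and $\Delta,\alpha,\beta\in\mathbb{C}$, $M_{\Delta,\alpha,\beta}=\mathbb{C}[\partial]v$ is the conformal $\mathcal{B}(-1)$-module with $L_0\,{}_\lambda\,v=-(\partial+\Delta\lambda+\alpha)v$,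 $L_1\,{}_\lambda\,v=\beta v$, and $L_i\,{}_\lambda\,v=0$ for $i\ge2$. *)

theory Defs
  imports "HOL-Computational_Algebra.Polynomial"
begin

text \<open>A module structure on a type 'm consists of a complex scalar multiplication,
  the action dd of the derivation \<partial>, and the lambda-action of the basis elements:
  act i v k is the coefficient of lambda^k in L_i _lambda v (an element of C[lambda] (x) M).
  The action of a general element of B(p) is determined by C-linearity and
  sesquilinearity from these data.\<close>

record 'm cmod =
  smul :: "complex \<Rightarrow> 'm \<Rightarrow> 'm"
  dd   :: "'m \<Rightarrow> 'm"
  act  :: "nat \<Rightarrow> 'm \<Rightarrow> nat \<Rightarrow> 'm"

definition conformal_module :: "complex \<Rightarrow> ('m::ab_group_add) cmod \<Rightarrow> bool" where
  "conformal_module p M \<longleftrightarrow>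
     Vector_Spaces.vector_space (smul M) \<and>
     (\<forall>x y. dd M (x + y) = dd M x + dd M y) \<and>
     (\<forall>c x. dd M (smul M c x) = smul M c (dd M x)) \<and>
     (\<forall>i x y k. act M i (x + y) k = act M i x k + act M i y k) \<and>
     (\<forall>i c x k. act M i (smul M c x) k = smul M c (act M i x k)) \<and>
     (\<forall>i x. finite {k. act M i x k \<noteq> 0}) \<and>
     \<comment> \<open>L_i _lambda (\<partial> v) = (\<partial> + lambda) (L_i _lambda v)\<close>
     (\<forall>i x k. act M i (dd M x) k =
        dd M (act M i x k) + (if k = 0 then 0 else act M i x (k - 1))) \<and>
     \<comment> \<open>[L_i _lambda L_j]_{lambda+mu} v = L_i _lambda (L_j _mu v) - L_j _mu (L_i _lambda v),
         compared coefficientwise at lambda^a mu^b; the left side equals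
         ((j+p) lambda - (i+p) mu) (L_{i+j} _{lambda+mu} v)\<close>
     (\<forall>i j x a b. act M i (act M j x b) a - act M j (act M i x a) b =
        (if 0 < a then smul M ((of_nat j + p) * of_nat ((a + b - 1) choose b))
                          (act M (i + j) x (a + b - 1)) else 0)
      - (if 0 < b then smul M ((of_nat i + p) * of_nat ((a + b - 1) choose a))
                          (act M (i + j) x (a + b - 1)) else 0))"

definition nontrivial_cm :: "('m::zero) cmod \<Rightarrow> bool" where
  "nontrivial_cm M \<longleftrightarrow> (\<exists>i x k. act M i x k \<noteq> 0)"

definition polyact :: "('m::comm_monoid_add) cmod \<Rightarrow> complex poly \<Rightarrow> 'm \<Rightarrow> 'm" where
  "polyact M g x = (\<Sum>k\<le>degree g. smul M (coeff g k) ((dd M ^^ k) x))"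

definition free_rank_one :: "('m::comm_monoid_add) cmod \<Rightarrow> bool" where
  "free_rank_one M \<longleftrightarrow> (\<exists>v. \<forall>x. \<exists>!g. x = polyact M g v)"

definition submodule_cm :: "('m::ab_group_add) cmod \<Rightarrow> 'm set \<Rightarrow> bool" where
  "submodule_cm M N \<longleftrightarrow> 0 \<in> N \<and> (\<forall>x\<in>N. \<forall>y\<in>N. x + y \<in> N) \<and>
     (\<forall>c. \<forall>x\<in>N. smul M c x \<in> N) \<and> (\<forall>x\<in>N. dd M x \<in> N) \<and>
     (\<forall>i k. \<forall>x\<in>N. act M i x k \<in> N)"

definition irreducible_cm :: "('m::ab_group_add) cmod \<Rightarrow> bool" where
  "irreducible_cm M \<longleftrightarrow> nontrivial_cm M \<and>
     (\<forall>N. submodule_cm M N \<longrightarrow> N = {0} \<or> N = UNIV)"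

definition cm_iso_onto :: "('a::ab_group_add) cmod \<Rightarrow> ('b::ab_group_add) cmod \<Rightarrow> 'b set \<Rightarrow> ('a \<Rightarrow> 'b) \<Rightarrow> bool" where
  "cm_iso_onto A B S f \<longleftrightarrow> bij_betw f UNIV S \<and>
     (\<forall>x y. f (x + y) = f x + f y) \<and>
     (\<forall>c x. f (smul A c x) = smul B c (f x)) \<and>
     (\<forall>x. f (dd A x) = dd B (f x)) \<and>
     (\<forall>i x k. f (act A i x k) = act B i (f x) k)"

definition cm_isomorphic :: "('a::ab_group_add) cmod \<Rightarrow> ('b::ab_group_add) cmod \<Rightarrow> bool" where
  "cm_isomorphic A B \<longleftrightarrow> (\<exists>f. cm_iso_onto A B UNIV f)"

text \<open>Concrete rank-one modules C[\<partial>]v, realised on complex poly (g \<mapsto> g(\<partial>) v).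
  taylor g k is the coefficient of lambda^k in g(\<partial>+lambda).  If L _lambda v = (\<Sum>_j lambda^j c_j(\<partial>)) v,
  then by sesquilinearity L _lambda (g(\<partial>) v) = g(\<partial>+lambda) (\<Sum>_j lambda^j c_j(\<partial>)) v.\<close>
definition taylor :: "complex poly \<Rightarrow> nat \<Rightarrow> complex poly" where
  "taylor g k = smult (1 / fact k) ((pderiv ^^ k) g)"

definition gen_act :: "(nat \<Rightarrow> complex poly) \<Rightarrow> complex poly \<Rightarrow> nat \<Rightarrow> complex poly" where
  "gen_act c g k = (\<Sum>j\<le>k. taylor g (k - j) * c j)"

text \<open>L_0 _lambda v = p(\<partial> + Delta lambda + alpha) v\<close>
definition L0coeffs :: "complex \<Rightarrow> complex \<Rightarrow> complex \<Rightarrow> nat \<Rightarrow> complex poly" where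
  "L0coeffs p \<Delta> \<alpha> j = (if j = 0 then [:p * \<alpha>, p:] else if j = 1 then [:p * \<Delta>:] else 0)"

definition Mda :: "complex \<Rightarrow> complex \<Rightarrow> complex \<Rightarrow> complex poly cmod" where
  "Mda p \<Delta> \<alpha> = \<lparr> smul = smult, dd = (\<lambda>g. [:0, 1:] * g),
     act = (\<lambda>i. if i = 0 then gen_act (L0coeffs p \<Delta> \<alpha>) else (\<lambda>g k. 0)) \<rparr>"

text \<open>p = -1: L_0 _lambda v = -(\<partial> + Delta lambda + alpha) v, L_1 _lambda v = beta v\<close>
definition Mdab :: "complex \<Rightarrow> complex \<Rightarrow> complex \<Rightarrow> complex poly cmod" where
  "Mdab \<Delta> \<alpha> \<beta> = \<lparr> smul = smult, dd = (\<lambda>g. [:0, 1:] * g),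
     act = (\<lambda>i. if i = 0 then gen_act (L0coeffs (-1) \<Delta> \<alpha>)
               else if i = 1 then gen_act (\<lambda>j. if j = 0 then [:\<beta>:] else 0)
               else (\<lambda>g k. 0)) \<rparr>"

end

theory Submission
  imports Defs
begin

text \<open>Fix a free generator v and write L_i _lambda v = \<Sum>_k lambda^k c_{i,k}(\<partial>) v. Transported to
  C[\<partial>], the lambda-bracket axiom becomes a family of polynomial identities among the c_{i,k}.
  Comparing degrees in those coming from [L_0 _lambda L_j] gives c_{0,0} = p(\<partial> + alpha), a constant
  c_{0,1} = p Delta, c_{0,k} = 0 for k \<ge> 2, and (j + p)/p = deg c_{j,b} + b whenever c_{j,b} \<noteq> 0.
  Comparing top coefficients excludes deg c_{j,0} \<ge> 3 and [L_j _lambda L_j] excludes degree 2, so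
  c_{j,k} = 0 for j \<ge> 1 except for a constant c_{1,0} when p = -1.

  A nonzero submodule of M(Delta, alpha, beta) contains a nonzero constant, the top coefficient of
  L_0 _lambda g (or of L_1 _lambda g), unless Delta = beta = 0; in that case every lambda-action
  lands in (\<partial> + alpha) M.\<close>

section \<open>Taylor coefficients\<close>

lemma coeff_pderiv_iterate:
  fixes g :: "complex poly"
  shows "coeff ((pderiv ^^ k) g) t * of_nat (fact t) = of_nat (fact (t + k)) * coeff g (t + k)"
proof (induction k arbitrary: t)
  case 0
  then show ?case by simp
next
  case (Suc k)
  have "coeff ((pderiv ^^ Suc k) g) t * of_nat (fact t)
      = coeff ((pderiv ^^ k) g) (Suc t) * of_nat (fact (Suc t))"
    by (simp add: coeff_pderiv algebra_simps)
  also have "\<dots> = of_nat (fact (Suc t + k)) * coeff g (Suc t + k)"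
    by (rule Suc.IH)
  finally show ?case by simp
qed

lemma taylor_coeff: "coeff (taylor g k) t = of_nat ((t + k) choose k) * coeff g (t + k)"
proof -
  have fact_nz: "(of_nat (fact t) :: complex) \<noteq> 0" "(of_nat (fact k) :: complex) \<noteq> 0"
    by simp_all
  have "(of_nat (fact (t + k)) :: complex) = of_nat ((t + k) choose k) * (of_nat (fact k) * of_nat (fact t))"
    using binomial_fact_lemma[of k "t + k"] by (metis add_diff_cancel_right' le_add2 mult.commute of_nat_mult)
  then have "coeff ((pderiv ^^ k) g) t * of_nat (fact t)
      = (of_nat ((t + k) choose k) * coeff g (t + k) * of_nat (fact k)) * of_nat (fact t)"
    using coeff_pderiv_iterate[of k g t] by (simp add: algebra_simps)
  then have "coeff ((pderiv ^^ k) g) t = of_nat ((t + k) choose k) * coeff g (t + k) * of_nat (fact k)"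
    using fact_nz by simp
  then show ?thesis
    unfolding taylor_def using fact_nz by simp
qed

lemma taylor_0 [simp]: "taylor g 0 = g"
  by (simp add: taylor_def)

lemma taylor_Suc_0 [simp]: "taylor g (Suc 0) = pderiv g"
  by (simp add: taylor_def)

lemma taylor_zero [simp]: "taylor 0 k = 0"
  by (simp add: poly_eq_iff taylor_coeff)

lemma taylor_add: "taylor (g + h) k = taylor g k + taylor h k"
  by (simp add: poly_eq_iff taylor_coeff algebra_simps)

lemma taylor_smult: "taylor (smult a g) k = smult a (taylor g k)"
  by (simp add: poly_eq_iff taylor_coeff)

lemma taylor_eq_0_if_degree_less: "degree g < k \<Longrightarrow> taylor g k = 0"
  by (simp add: poly_eq_iff taylor_coeff coeff_eq_0)

lemma taylor_degree: "taylor g (degree g) = [:lead_coeff g:]"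
proof -
  have "coeff (taylor g (degree g)) t = coeff [:lead_coeff g:] t" for t
    by (cases t) (simp_all add: taylor_coeff coeff_eq_0)
  then show ?thesis
    by (simp add: poly_eq_iff)
qed

lemma taylor_pCons_0_Suc: "taylor (pCons 0 g) (Suc k) = pCons 0 (taylor g (Suc k)) + taylor g k"
proof -
  have "coeff (taylor (pCons 0 g) (Suc k)) t = coeff (pCons 0 (taylor g (Suc k)) + taylor g k) t" for t
  proof (cases t)
    case 0
    then show ?thesis by (simp add: taylor_coeff)
  next
    case (Suc s)
    have "Suc s + Suc k choose Suc k = (s + Suc k choose Suc k) + (Suc s + k choose k)"
      by (simp add: add.commute)
    then show ?thesis
      using Suc by (simp add: taylor_coeff algebra_simps)
  qed
  then show ?thesis
    by (simp add: poly_eq_iff)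
qed

section \<open>The polynomial model of a lambda-action\<close>

lemma sum_eq_single:
  assumes "finite A" "x \<in> A" "\<And>k. k \<in> A \<Longrightarrow> k \<noteq> x \<Longrightarrow> f k = 0"
  shows "sum f A = f x"
proof -
  have "sum f A = f x + sum f (A - {x})"
    using assms by (simp add: sum.remove)
  also have "sum f (A - {x}) = 0"
    using assms by (intro sum.neutral) auto
  finally show ?thesis by simp
qed

lemma pCons_0_sum: "pCons 0 (\<Sum>i\<in>A. f i) = (\<Sum>i\<in>A. pCons 0 (f i))"
  by (induction A rule: infinite_finite_induct) (simp_all, metis add_0 add_pCons)

lemma gen_act_0 [simp]: "gen_act c g 0 = g * c 0"
  by (simp add: gen_act_def)

lemma gen_act_zero [simp]: "gen_act c 0 k = 0"
  by (simp add: gen_act_def)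

lemma gen_act_zero_coeffs [simp]: "gen_act (\<lambda>_. 0) g k = 0"
  by (simp add: gen_act_def)

lemma gen_act_Suc_0: "gen_act c g (Suc 0) = pderiv g * c 0 + g * c (Suc 0)"
  by (simp add: gen_act_def)

lemma gen_act_add: "gen_act c (g + h) k = gen_act c g k + gen_act c h k"
  by (simp add: gen_act_def taylor_add algebra_simps sum.distrib)

lemma gen_act_pCons_0:
  "gen_act c (pCons 0 g) k = pCons 0 (gen_act c g k) + (if k = 0 then 0 else gen_act c g (k - 1))"
proof (cases k)
  case 0
  then show ?thesis by simp
next
  case (Suc k')
  have summand: "taylor (pCons 0 g) (Suc k' - j) * c j
      = pCons 0 (taylor g (Suc k' - j) * c j) + (if j = Suc k' then 0 else taylor g (k' - j) * c j)"
    if "j \<le> Suc k'" for j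
  proof (cases "j = Suc k'")
    case False
    then have "Suc k' - j = Suc (k' - j)"
      using that by simp
    then show ?thesis
      using False by (simp add: taylor_pCons_0_Suc algebra_simps)
  qed simp
  have "gen_act c (pCons 0 g) (Suc k')
      = (\<Sum>j\<le>Suc k'. pCons 0 (taylor g (Suc k' - j) * c j))
        + (\<Sum>j\<le>Suc k'. if j = Suc k' then 0 else taylor g (k' - j) * c j)"
    by (simp add: gen_act_def summand sum.distrib)
  also have "(\<Sum>j\<le>Suc k'. if j = Suc k' then 0 else taylor g (k' - j) * c j) = gen_act c g k'"
    by (simp add: gen_act_def)
  also have "(\<Sum>j\<le>Suc k'. pCons 0 (taylor g (Suc k' - j) * c j)) = pCons 0 (gen_act c g (Suc k'))"
    by (simp only: gen_act_def pCons_0_sum)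
  finally show ?thesis
    using Suc by simp
qed

lemma gen_act_degree_0:
  assumes "degree g = 0"
  shows "gen_act c g k = g * c k"
proof -
  have "gen_act c g k = taylor g (k - k) * c k"
    unfolding gen_act_def using assms taylor_eq_0_if_degree_less by (intro sum_eq_single) auto
  then show ?thesis by simp
qed

lemma gen_act_two_coeffs:
  assumes "\<And>k. 2 \<le> k \<Longrightarrow> c k = 0"
  shows "gen_act c g k = taylor g k * c 0 + (if k = 0 then 0 else taylor g (k - 1) * c 1)"
proof (cases k)
  case (Suc k')
  have "gen_act c g k = (\<Sum>j\<in>{0, 1}. taylor g (k - j) * c j)"
    unfolding gen_act_def using assms Suc by (intro sum.mono_neutral_right) auto
  then show ?thesis
    using Suc by simp
qed simp

section \<open>The modules M(Delta, alpha) and M(Delta, alpha, beta)\<close>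

definition poly_model :: "complex poly cmod \<Rightarrow> bool" where
  "poly_model M \<longleftrightarrow> smul M = smult \<and> dd M = (\<lambda>g. [:0, 1:] * g)"

lemma poly_model_Mda: "poly_model (Mda p \<Delta> \<alpha>)"
  by (simp add: poly_model_def Mda_def)

lemma poly_model_Mdab: "poly_model (Mdab \<Delta> \<alpha> \<beta>)"
  by (simp add: poly_model_def Mdab_def)

lemma submodule_mult_closed:
  assumes "poly_model M" "submodule_cm M S" "g \<in> S"
  shows "h * g \<in> S"
proof (induction h)
  case 0
  then show ?case using assms by (simp add: submodule_cm_def)
next
  case (pCons a h)
  have "smult a g \<in> S" "[:0, 1:] * (h * g) \<in> S"
    using assms pCons by (metis submodule_cm_def poly_model_def)+
  then have "smult a g + [:0, 1:] * (h * g) \<in> S"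
    using assms(2) by (simp add: submodule_cm_def)
  then show ?case by simp
qed

lemma submodule_diff_closed:
  assumes "poly_model M" "submodule_cm M S" "x \<in> S" "y \<in> S"
  shows "x - y \<in> S"
proof -
  have "- y \<in> S"
    using submodule_mult_closed[OF assms(1,2,4), of "-1"] by simp
  then have "x + - y \<in> S"
    using assms(2,3) unfolding submodule_cm_def by blast
  then show ?thesis by simp
qed

lemma submodule_eq_UNIV_if_const:
  assumes "poly_model M" "submodule_cm M S" "[:e:] \<in> S" "e \<noteq> 0"
  shows "S = UNIV"
proof -
  have "g \<in> S" for g
    using submodule_mult_closed[OF assms(1-3), of "smult (1 / e) g"] assms(4) by simp
  then show ?thesis by auto
qed

lemma Mdab_beta_0: "Mdab \<Delta> \<alpha> 0 = Mda (-1) \<Delta> \<alpha>"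
proof -
  have zero: "(\<lambda>j. if j = 0 then [:0:] else 0) = (\<lambda>_. 0 :: complex poly)"
    by auto
  show ?thesis
    unfolding Mdab_def Mda_def zero by (simp add: fun_eq_iff)
qed

lemma gen_act_L0coeffs:
  "gen_act (L0coeffs p \<Delta> \<alpha>) g k
     = taylor g k * [:p * \<alpha>, p:] + (if k = 0 then 0 else taylor g (k - 1) * [:p * \<Delta>:])"
  by (subst gen_act_two_coeffs) (auto simp: L0coeffs_def)

lemma act_Mda:
  "act (Mda p \<Delta> \<alpha>) i g k =
     (if i = 0 then taylor g k * [:p * \<alpha>, p:] + (if k = 0 then 0 else taylor g (k - 1) * [:p * \<Delta>:])
      else 0)"
  by (simp add: Mda_def gen_act_L0coeffs)

lemma act_Mdab_1: "act (Mdab \<Delta> \<alpha> \<beta>) (Suc 0) g k = taylor g k * [:\<beta>:]"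
  by (simp add: Mdab_def, subst gen_act_two_coeffs) auto

lemma nontrivial_Mda: "p \<noteq> 0 \<Longrightarrow> nontrivial_cm (Mda p \<Delta> \<alpha>)"
  unfolding nontrivial_cm_def by (rule exI[of _ 0], rule exI[of _ 1], rule exI[of _ 0]) (simp add: act_Mda)

lemma nontrivial_Mdab: "nontrivial_cm (Mdab \<Delta> \<alpha> \<beta>)"
  unfolding nontrivial_cm_def
  by (rule exI[of _ 0], rule exI[of _ 1], rule exI[of _ 0]) (simp add: Mdab_def L0coeffs_def)

lemma irreducible_if_act_const:
  assumes "poly_model M" "nontrivial_cm M"
    and const: "\<And>g. g \<noteq> 0 \<Longrightarrow> \<exists>i k e. e \<noteq> 0 \<and> act M i g k = [:e:]"
  shows "irreducible_cm M"
  unfolding irreducible_cm_def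
proof (intro conjI allI impI)
  fix S assume S: "submodule_cm M S"
  show "S = {0} \<or> S = UNIV"
  proof (cases "S = {0}")
    case False
    then obtain g where "g \<in> S" "g \<noteq> 0"
      using S by (auto simp: submodule_cm_def)
    moreover obtain i k e where "e \<noteq> 0" "act M i g k = [:e:]"
      using const \<open>g \<noteq> 0\<close> by blast
    ultimately have "S = UNIV"
      using submodule_eq_UNIV_if_const[OF assms(1) S] S by (metis submodule_cm_def)
    then show ?thesis by simp
  qed simp
qed (rule assms(2))

lemma irreducible_Mda:
  assumes "p \<noteq> 0" "\<Delta> \<noteq> 0"
  shows "irreducible_cm (Mda p \<Delta> \<alpha>)"
proof (rule irreducible_if_act_const[OF poly_model_Mda nontrivial_Mda[OF assms(1)]])
  fix g :: "complex poly" assume "g \<noteq> 0"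
  then have "p * \<Delta> * lead_coeff g \<noteq> 0" "act (Mda p \<Delta> \<alpha>) 0 g (Suc (degree g)) = [:p * \<Delta> * lead_coeff g:]"
    using assms by (simp_all add: act_Mda taylor_eq_0_if_degree_less taylor_degree)
  then show "\<exists>i k e. e \<noteq> 0 \<and> act (Mda p \<Delta> \<alpha>) i g k = [:e:]"
    by blast
qed

lemma irreducible_Mdab:
  assumes "\<beta> \<noteq> 0"
  shows "irreducible_cm (Mdab \<Delta> \<alpha> \<beta>)"
proof (rule irreducible_if_act_const[OF poly_model_Mdab nontrivial_Mdab])
  fix g :: "complex poly" assume "g \<noteq> 0"
  then have "\<beta> * lead_coeff g \<noteq> 0" "act (Mdab \<Delta> \<alpha> \<beta>) (Suc 0) g (degree g) = [:\<beta> * lead_coeff g:]"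
    using assms by (simp_all add: act_Mdab_1 taylor_degree)
  then show "\<exists>i k e. e \<noteq> 0 \<and> act (Mdab \<Delta> \<alpha> \<beta>) i g k = [:e:]"
    by blast
qed

subsection \<open>The case Delta = 0\<close>

definition d_plus :: "complex \<Rightarrow> complex poly" where
  "d_plus \<alpha> = [:\<alpha>, 1:]"

lemma d_plus_nonzero [simp]: "d_plus \<alpha> \<noteq> 0"
  by (simp add: d_plus_def)

lemma degree_d_plus [simp]: "degree (d_plus \<alpha>) = 1"
  by (simp add: d_plus_def)

lemma range_d_plus_Mda:
  "range (\<lambda>v. dd (Mda p \<Delta> \<alpha>) v + smul (Mda p \<Delta> \<alpha>) \<alpha> v) = range (\<lambda>h. h * d_plus \<alpha>)"
  by (simp add: Mda_def d_plus_def algebra_simps)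

lemma act_Mda_Delta_0: "act (Mda p 0 \<alpha>) i g k = (if i = 0 then smult p (taylor g k * d_plus \<alpha>) else 0)"
proof -
  have "[:p * \<alpha>, p:] = smult p (d_plus \<alpha>)"
    by (simp add: d_plus_def)
  then show ?thesis
    unfolding act_Mda by simp
qed

lemma taylor_mult_d_plus:
  "taylor (g * d_plus \<alpha>) k = taylor g k * d_plus \<alpha> + (if k = 0 then 0 else taylor g (k - 1))"
proof -
  have "g * d_plus \<alpha> = smult \<alpha> g + pCons 0 g"
    by (simp add: d_plus_def)
  then show ?thesis
    by (cases k) (simp_all add: taylor_add taylor_smult taylor_pCons_0_Suc d_plus_def algebra_simps)
qed

lemma submodule_multiples:
  assumes "poly_model M" and act: "\<And>i k h. act M i (h * r) k \<in> range (\<lambda>h. h * r)"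
  shows "submodule_cm M (range (\<lambda>h. h * r))"
  unfolding submodule_cm_def
proof (intro conjI ballI allI)
  have smul: "smul M = smult" and dd: "dd M = (\<lambda>g. [:0, 1:] * g)"
    using assms(1) by (simp_all add: poly_model_def)
  show "0 \<in> range (\<lambda>h. h * r)"
    by (rule range_eqI[of _ _ 0]) simp
  fix x assume "x \<in> range (\<lambda>h. h * r)"
  then obtain a where x: "x = a * r" by blast
  show "smul M c x \<in> range (\<lambda>h. h * r)" for c
    unfolding smul x by (rule range_eqI[of _ _ "smult c a"]) simp
  show "dd M x \<in> range (\<lambda>h. h * r)"
    unfolding dd x by (rule range_eqI[of _ _ "[:0, 1:] * a"]) simp
  show "act M i x k \<in> range (\<lambda>h. h * r)" for i k
    unfolding x by (rule act)
  fix y assume "y \<in> range (\<lambda>h. h * r)"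
  then obtain b where y: "y = b * r" by blast
  show "x + y \<in> range (\<lambda>h. h * r)"
    unfolding x y by (rule range_eqI[of _ _ "a + b"]) (simp add: distrib_right)
qed

lemma submodule_Mda_Delta_0: "submodule_cm (Mda p 0 \<alpha>) (range (\<lambda>h. h * d_plus \<alpha>))"
proof (rule submodule_multiples[OF poly_model_Mda])
  fix i k h
  have "act (Mda p 0 \<alpha>) i (h * d_plus \<alpha>) k
      = (if i = 0 then smult p (taylor (h * d_plus \<alpha>) k) else 0) * d_plus \<alpha>"
    by (simp add: act_Mda_Delta_0)
  then show "act (Mda p 0 \<alpha>) i (h * d_plus \<alpha>) k \<in> range (\<lambda>h. h * d_plus \<alpha>)"
    by (metis rangeI)
qed

lemma d_plus_mem_submodule_Mda_Delta_0:
  assumes "p \<noteq> 0" "submodule_cm (Mda p 0 \<alpha>) S" "g \<in> S" "g \<noteq> 0"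
  shows "d_plus \<alpha> \<in> S"
proof -
  have "act (Mda p 0 \<alpha>) 0 g (degree g) \<in> S"
    using assms(2,3) by (simp add: submodule_cm_def)
  then have "smult (p * lead_coeff g) (d_plus \<alpha>) \<in> S"
    by (simp add: act_Mda_Delta_0 taylor_degree)
  moreover have "\<forall>c. \<forall>x\<in>S. smult c x \<in> S"
    using assms(2) by (simp add: submodule_cm_def Mda_def)
  ultimately have "smult (1 / (p * lead_coeff g)) (smult (p * lead_coeff g) (d_plus \<alpha>)) \<in> S"
    by blast
  then show ?thesis
    using assms(1,4) by simp
qed

text \<open>Every g is h(\<partial>)(\<partial> + alpha) plus the constant g(-alpha).\<close>

lemma submodule_Mda_Delta_0_eq:
  assumes "p \<noteq> 0" and S: "submodule_cm (Mda p 0 \<alpha>) S" "S \<noteq> {0}" "S \<noteq> UNIV"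
  shows "S = range (\<lambda>h. h * d_plus \<alpha>)"
proof
  obtain g where "g \<in> S" "g \<noteq> 0"
    using S by (auto simp: submodule_cm_def)
  then have "d_plus \<alpha> \<in> S"
    using d_plus_mem_submodule_Mda_Delta_0 assms(1) S(1) by blast
  then show multiples: "range (\<lambda>h. h * d_plus \<alpha>) \<subseteq> S"
    using submodule_mult_closed[OF poly_model_Mda S(1)] by blast
  show "S \<subseteq> range (\<lambda>h. h * d_plus \<alpha>)"
  proof
    fix x assume x: "x \<in> S"
    define e where "e = poly x (-\<alpha>)"
    obtain h where h: "x - [:e:] = h * d_plus \<alpha>"
      using poly_eq_0_iff_dvd[of "x - [:e:]" "-\<alpha>"] by (auto simp: e_def d_plus_def elim: dvdE)
    then have "x - (x - [:e:]) \<in> S"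
      using multiples x submodule_diff_closed[OF poly_model_Mda S(1)] by blast
    then have "e = 0"
      using submodule_eq_UNIV_if_const[OF poly_model_Mda S(1)] S(3) by auto
    then show "x \<in> range (\<lambda>h. h * d_plus \<alpha>)"
      using h by simp
  qed
qed

lemma proper_submodules_Mda_Delta_0:
  assumes "p \<noteq> 0"
  shows "{S. submodule_cm (Mda p 0 \<alpha>) S \<and> S \<noteq> {0} \<and> S \<noteq> UNIV} = {range (\<lambda>h. h * d_plus \<alpha>)}"
proof -
  have "d_plus \<alpha> \<in> range (\<lambda>h. h * d_plus \<alpha>)" "d_plus \<alpha> \<noteq> 0"
    by (simp_all add: image_iff exI[of _ 1])
  then have nonzero: "range (\<lambda>h. h * d_plus \<alpha>) \<noteq> {0}"
    by blast
  have "1 \<notin> range (\<lambda>h. h * d_plus \<alpha>)"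
  proof
    assume "1 \<in> range (\<lambda>h. h * d_plus \<alpha>)"
    then obtain h where "1 = h * d_plus \<alpha>" by blast
    then have "degree (h * d_plus \<alpha>) = 0" "h \<noteq> 0"
      by (metis degree_1, metis mult_zero_left one_neq_zero)
    then show False
      by (simp add: degree_mult_eq)
  qed
  then have "range (\<lambda>h. h * d_plus \<alpha>) \<noteq> UNIV"
    by blast
  then show ?thesis
    using submodule_Mda_Delta_0_eq[OF assms] submodule_Mda_Delta_0 nonzero by blast
qed

lemma Mda_Delta_1_iso:
  "cm_iso_onto (Mda p 1 \<alpha>) (Mda p 0 \<alpha>) (range (\<lambda>h. h * d_plus \<alpha>)) (\<lambda>h. h * d_plus \<alpha>)"
  unfolding cm_iso_onto_def
proof (intro conjI allI)
  show "bij_betw (\<lambda>h. h * d_plus \<alpha>) UNIV (range (\<lambda>h. h * d_plus \<alpha>))"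
    by (rule bij_betw_imageI) (auto intro: inj_onI)
  have lin: "[:p * \<alpha>, p:] = smult p (d_plus \<alpha>)" "[:p * 1:] = smult p 1"
    by (simp_all add: d_plus_def)
  have const: "h * [:p:] = smult p h" "[:p:] * h = smult p h" for h
    by simp_all
  show "act (Mda p 1 \<alpha>) i x k * d_plus \<alpha> = act (Mda p 0 \<alpha>) i (x * d_plus \<alpha>) k" for i x k
    unfolding act_Mda_Delta_0 act_Mda lin taylor_mult_d_plus
    by (simp add: const algebra_simps del: mult_pCons_left mult_pCons_right)
qed (simp_all add: Mda_def algebra_simps)

lemma irreducible_Mda_iff:
  assumes "p \<noteq> 0"
  shows "irreducible_cm (Mda p \<Delta> \<alpha>) \<longleftrightarrow> \<Delta> \<noteq> 0"
proof
  assume irreducible: "irreducible_cm (Mda p \<Delta> \<alpha>)"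
  show "\<Delta> \<noteq> 0"
  proof
    assume "\<Delta> = 0"
    then have "range (\<lambda>h. h * d_plus \<alpha>) \<in> {S. submodule_cm (Mda p \<Delta> \<alpha>) S \<and> S \<noteq> {0} \<and> S \<noteq> UNIV}"
      using proper_submodules_Mda_Delta_0[OF assms] by simp
    then show False
      using irreducible unfolding irreducible_cm_def by blast
  qed
qed (rule irreducible_Mda[OF assms])

lemma irreducible_Mdab_iff: "irreducible_cm (Mdab \<Delta> \<alpha> \<beta>) \<longleftrightarrow> \<Delta> \<noteq> 0 \<or> \<beta> \<noteq> 0"
  using irreducible_Mdab irreducible_Mda_iff[of "-1"] by (cases "\<beta> = 0") (auto simp: Mdab_beta_0)

section \<open>Rank one modules and their structure polynomials\<close>

text \<open>Writing L_i _lambda v = \<Sum>_k lambda^k c i k (\<partial>) v for a free generator v, the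
  lambda-bracket axiom becomes the following family of polynomial identities.\<close>

locale bracket_polys =
  fixes p :: complex and c :: "nat \<Rightarrow> nat \<Rightarrow> complex poly"
  assumes bracket: "\<And>i j a b. gen_act (c i) (c j b) a - gen_act (c j) (c i a) b =
        (if 0 < a then smult ((of_nat j + p) * of_nat ((a + b - 1) choose b)) (c (i + j) (a + b - 1)) else 0)
      - (if 0 < b then smult ((of_nat i + p) * of_nat ((a + b - 1) choose a)) (c (i + j) (a + b - 1)) else 0)"
    and finite_support: "\<And>i. finite {k. c i k \<noteq> 0}"

locale conformal_cm =
  fixes p :: complex and M :: "('m::ab_group_add) cmod"
  assumes conformal: "conformal_module p M"
begin

sublocale V: vector_space "smul M"
  using conformal by (simp add: conformal_module_def)

sublocale D: additive "dd M"
  by standard (use conformal in \<open>simp add: conformal_module_def\<close>)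

lemma dd_smul: "dd M (smul M c x) = smul M c (dd M x)"
  using conformal by (simp add: conformal_module_def)

lemma act_add: "act M i (x + y) k = act M i x k + act M i y k"
  using conformal by (simp add: conformal_module_def)

lemma act_zero [simp]: "act M i 0 k = 0"
  using act_add[of i 0 0 k] by simp

lemma act_smul: "act M i (smul M c x) k = smul M c (act M i x k)"
  using conformal by (simp add: conformal_module_def)

lemma act_dd: "act M i (dd M x) k = dd M (act M i x k) + (if k = 0 then 0 else act M i x (k - 1))"
  using conformal by (simp add: conformal_module_def)

lemma finite_act: "finite {k. act M i x k \<noteq> 0}"
  using conformal by (simp add: conformal_module_def)

lemma act_bracket: "act M i (act M j x b) a - act M j (act M i x a) b =
        (if 0 < a then smul M ((of_nat j + p) * of_nat ((a + b - 1) choose b))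
                          (act M (i + j) x (a + b - 1)) else 0)
      - (if 0 < b then smul M ((of_nat i + p) * of_nat ((a + b - 1) choose a))
                          (act M (i + j) x (a + b - 1)) else 0)"
  using conformal unfolding conformal_module_def by blast

lemma polyact_eq_sum_lessThan:
  assumes "degree g < N"
  shows "polyact M g x = (\<Sum>k<N. smul M (coeff g k) ((dd M ^^ k) x))"
  unfolding polyact_def
  by (rule sum.mono_neutral_left) (use assms in \<open>auto simp: coeff_eq_0\<close>)

lemma polyact_zero [simp]: "polyact M 0 x = 0"
  by (simp add: polyact_def)

lemma polyact_add: "polyact M (g + h) x = polyact M g x + polyact M h x"
proof -
  define N where "N = Suc (max (degree g) (degree h))"
  have "degree (g + h) < N" "degree g < N" "degree h < N"
    using degree_add_le_max[of g h] by (simp_all add: N_def)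
  then show ?thesis
    by (simp add: polyact_eq_sum_lessThan V.scale_left_distrib sum.distrib del: sum.lessThan_Suc)
qed

lemma polyact_smult: "polyact M (smult c g) x = smul M c (polyact M g x)"
proof -
  have d: "degree (smult c g) < Suc (degree g)"
    using degree_smult_le[of c g] by simp
  have d': "degree g < Suc (degree g)"
    by simp
  show ?thesis
    unfolding polyact_eq_sum_lessThan[OF d] polyact_eq_sum_lessThan[OF d'] V.scale_sum_right
    by (simp del: sum.lessThan_Suc)
qed

lemma polyact_diff: "polyact M (g - h) x = polyact M g x - polyact M h x"
  using polyact_add[of "g - h" h x] by (simp add: eq_diff_eq)

lemma polyact_pCons: "polyact M (pCons a h) x = smul M a x + dd M (polyact M h x)"
proof -
  have "degree (pCons a h) < Suc (Suc (degree h))"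
    by (simp add: degree_pCons_le le_imp_less_Suc)
  then have "polyact M (pCons a h) x
      = (\<Sum>k<Suc (Suc (degree h)). smul M (coeff (pCons a h) k) ((dd M ^^ k) x))"
    by (rule polyact_eq_sum_lessThan)
  also have "\<dots> = smul M a x + (\<Sum>k<Suc (degree h). smul M (coeff h k) ((dd M ^^ Suc k) x))"
    by (simp only: sum.lessThan_Suc_shift) simp
  also have "(\<Sum>k<Suc (degree h). smul M (coeff h k) ((dd M ^^ Suc k) x)) = dd M (polyact M h x)"
    by (simp add: polyact_eq_sum_lessThan[of h "Suc (degree h)"] D.sum dd_smul del: sum.lessThan_Suc)
  finally show ?thesis .
qed

lemma polyact_pCons_0: "polyact M (pCons 0 h) x = dd M (polyact M h x)"
  by (simp add: polyact_pCons)

end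

locale rank_one_cm = conformal_cm p M for p and M :: "('m::ab_group_add) cmod" +
  fixes v :: 'm
  assumes generator: "\<And>x. \<exists>!g. x = polyact M g v"
begin

definition coords :: "'m \<Rightarrow> complex poly" where
  "coords x = (THE g. x = polyact M g v)"

lemma polyact_coords [simp]: "polyact M (coords x) v = x"
  unfolding coords_def using theI'[OF generator[of x]] by simp

lemma polyact_generator_inj: "polyact M g v = polyact M h v \<Longrightarrow> g = h"
  using generator[of "polyact M g v"] by metis

lemma coords_polyact [simp]: "coords (polyact M g v) = g"
  using polyact_generator_inj polyact_coords by metis

definition act_poly :: "nat \<Rightarrow> nat \<Rightarrow> complex poly" where
  "act_poly i k = coords (act M i v k)"

lemma act_generator: "act M i v k = polyact M (act_poly i k) v"
  by (simp add: act_poly_def)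

lemma coords_0 [simp]: "coords 0 = 0"
  using coords_polyact[of 0] by simp

lemma act_polyact: "act M i (polyact M g v) k = polyact M (gen_act (act_poly i) g k) v"
proof (induction g arbitrary: k)
  case (pCons a h)
  have "gen_act (act_poly i) (pCons a h) k
      = smult a (act_poly i k) + pCons 0 (gen_act (act_poly i) h k)
        + (if k = 0 then 0 else gen_act (act_poly i) h (k - 1))"
  proof -
    have "pCons a h = [:a:] + pCons 0 h"
      by simp
    then have "gen_act (act_poly i) (pCons a h) k = gen_act (act_poly i) [:a:] k + gen_act (act_poly i) (pCons 0 h) k"
      by (metis gen_act_add)
    then show ?thesis
      by (simp add: gen_act_degree_0 gen_act_pCons_0 add.assoc)
  qed
  moreover have "act M i (polyact M (pCons a h) v) k
      = smul M a (act M i v k) + dd M (act M i (polyact M h v) k)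
        + (if k = 0 then 0 else act M i (polyact M h v) (k - 1))"
    by (simp add: polyact_pCons act_add act_smul act_dd add.assoc)
  ultimately show ?case
    by (simp add: pCons.IH act_generator polyact_add polyact_smult polyact_pCons_0)
qed simp

lemma coords_act: "coords (act M i x k) = gen_act (act_poly i) (coords x) k"
  using act_polyact[of i "coords x" k] by simp

lemma coords_add: "coords (x + y) = coords x + coords y"
  by (metis coords_polyact polyact_add polyact_coords)

lemma coords_smul: "coords (smul M c x) = smult c (coords x)"
  by (metis coords_polyact polyact_smult polyact_coords)

lemma coords_dd: "coords (dd M x) = [:0, 1:] * coords x"
proof -
  have "dd M x = polyact M (pCons 0 (coords x)) v"
    by (simp add: polyact_pCons_0)
  moreover have "pCons 0 (coords x) = [:0, 1:] * coords x"
    by simp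
  ultimately show ?thesis
    by (metis coords_polyact)
qed

sublocale bracket_polys p act_poly
proof
  fix i j a b
  show "gen_act (act_poly i) (act_poly j b) a - gen_act (act_poly j) (act_poly i a) b =
        (if 0 < a then smult ((of_nat j + p) * of_nat ((a + b - 1) choose b)) (act_poly (i + j) (a + b - 1)) else 0)
      - (if 0 < b then smult ((of_nat i + p) * of_nat ((a + b - 1) choose a)) (act_poly (i + j) (a + b - 1)) else 0)"
    using act_bracket[of i j v b a]
    by (intro polyact_generator_inj) (simp add: polyact_diff polyact_smult act_generator act_polyact)
next
  show "finite {k. act_poly i k \<noteq> 0}" for i
    by (rule finite_subset[OF _ finite_act[of i v]]) (auto simp: act_poly_def)
qed

lemma act_poly_nontrivial:
  assumes "nontrivial_cm M"
  shows "\<exists>i k. act_poly i k \<noteq> 0"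
proof (rule ccontr)
  assume "\<not> ?thesis"
  then have "act_poly i = (\<lambda>_. 0)" for i
    by auto
  then have "act M i x k = 0" for i x k
    by (metis coords_act gen_act_zero_coeffs polyact_coords polyact_zero)
  then show False
    using assms by (simp add: nontrivial_cm_def)
qed

lemma isomorphic_poly_model:
  assumes "poly_model N" "\<And>i. act N i = gen_act (act_poly i)"
  shows "cm_isomorphic M N"
  unfolding cm_isomorphic_def cm_iso_onto_def
proof (intro exI[of _ coords] conjI allI)
  show "bij_betw coords UNIV UNIV"
    by (metis bij_betw_def coords_polyact inj_on_inverseI polyact_coords surj_def)
qed (use assms in \<open>simp_all add: poly_model_def coords_add coords_smul coords_dd coords_act\<close>)

end

section \<open>Solving the bracket identities\<close>

lemma coeff_mult_linear:
  "coeff (h * [:q, p:]) n = q * coeff h n + (if n = 0 then 0 else p * coeff h (n - 1))"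
  by (cases n) (simp_all add: coeff_pCons)

lemma eigenvalue_pderiv_mult_linear:
  fixes g :: "'a::{idom, ring_char_0} poly"
  assumes "pderiv g * [:q, p:] = smult s g" "g \<noteq> 0"
  shows "s = p * of_nat (degree g)"
proof -
  have "s * lead_coeff g = coeff (pderiv g * [:q, p:]) (degree g)"
    using assms(1) by (metis coeff_smult)
  also have "\<dots> = p * of_nat (degree g) * lead_coeff g"
    by (cases "degree g") (simp_all add: coeff_mult_linear coeff_pderiv coeff_eq_0)
  finally show ?thesis
    using assms(2) by simp
qed

lemma gen_act_top:
  assumes "\<And>k. N < k \<Longrightarrow> c k = 0"
  shows "gen_act c g (N + degree g) = [:lead_coeff g:] * c N"
proof -
  have "gen_act c g (N + degree g) = taylor g (N + degree g - N) * c N"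
    unfolding gen_act_def
  proof (rule sum_eq_single)
    fix k assume "k \<in> {..N + degree g}" "k \<noteq> N"
    then show "taylor g (N + degree g - k) * c k = 0"
      using assms by (cases "k < N") (simp_all add: taylor_eq_0_if_degree_less)
  qed auto
  then show ?thesis
    by (simp add: taylor_degree)
qed

lemma of_nat_choose_2: "(of_nat (n choose 2) :: 'a::field_char_0) = of_nat n * (of_nat n - 1) / 2"
  by (simp add: binomial_gbinomial gbinomial_prod_rev numeral_2_eq_2 prod.atLeast0_lessThan_Suc)

lemma of_nat_choose_3:
  "(of_nat (n choose 3) :: 'a::field_char_0) = of_nat n * (of_nat n - 1) * (of_nat n - 2) / 6"
  by (simp add: binomial_gbinomial gbinomial_prod_rev eval_nat_numeral prod.atLeast0_lessThan_Suc
      field_simps)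

lemma of_nat_choose_4:
  "(of_nat (n choose 4) :: 'a::field_char_0)
     = of_nat n * (of_nat n - 1) * (of_nat n - 2) * (of_nat n - 3) / 24"
  by (simp add: binomial_gbinomial gbinomial_prod_rev eval_nat_numeral prod.atLeast0_lessThan_Suc
      field_simps)

lemma of_nat_plus_nonzero:
  assumes "0 < k"
  shows "of_nat s + of_nat k \<noteq> (0 :: 'a::semiring_char_0)"
proof -
  have "of_nat s + of_nat k = (of_nat (s + k) :: 'a)"
    by simp
  then show ?thesis
    using assms by (simp only: of_nat_eq_0_iff)
qed

text \<open>Subtracting the two quadratics forces D = 1/2, and then S^2 + 5S + 7 = 0.\<close>

lemma quadratics_no_common_solution:
  fixes S D :: "'a::field_char_0"
  assumes S: "S = of_nat s"
    and q1: "12*D*D - 12*D - (S+1)*(S+4) = 0"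
    and q2: "12*D*D - (2*S+20)*D - S*S - 4*S = 0"
  shows False
proof -
  have "(S + 4) * (2*D - 1) = (12*D*D - 12*D - (S+1)*(S+4)) - (12*D*D - (2*S+20)*D - S*S - 4*S)"
    by (simp add: algebra_simps)
  also have "\<dots> = 0"
    using q1 q2 by simp
  moreover have "S + 4 \<noteq> 0"
    using S of_nat_plus_nonzero[of 4 s] by simp
  ultimately have D: "D = 1/2"
    by (simp add: mult.commute)
  have "S*S + 5*S + 7 = -(12*D*D - 12*D - (S+1)*(S+4))"
    unfolding D by (simp add: algebra_simps)
  then have "of_nat (s*s + 5*s + 7) = (0 :: 'a)"
    using q1 S by simp
  then show False
    by (simp only: of_nat_eq_0_iff)
qed

lemma top_coeffs_contradiction:
  fixes S P D L X1 X2 X3 :: "'a::field_char_0"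
  assumes S: "S = of_nat s" and P: "P \<noteq> 0" and L: "L \<noteq> 0"
  and h1: "P*((S+3)*(S+2)/2)*L + P*D*(S+3)*L = P*(S+3)*X1"
  and h2: "P*((S+3)*(S+2)*(S+1)/6)*L + P*D*((S+3)*(S+2)/2)*L = P*(S+3)*X2"
  and h3: "P*((S+3)*(S+2)*(S+1)*S/24)*L + P*D*((S+3)*(S+2)*(S+1)/6)*L = P*(S+3)*X3"
  and t1: "P*((S+2)*(S+1)/2)*X1 + P*D*(S+2)*X1 = (2*P*(S+3) - P)*X2"
  and t2: "P*((S+1)*S/2)*X2 + P*D*(S+1)*X2 = (3*P*(S+3) - 3*P)*X3"
  shows False
proof -
  have nonzero: "S + 3 \<noteq> 0" "S + 2 \<noteq> 0" "S + 1 \<noteq> 0"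
    using S of_nat_plus_nonzero[of 3 s] of_nat_plus_nonzero[of 2 s] of_nat_plus_nonzero[of 1 s]
    by simp_all
  have "P*(S+3)*X1 = P*(S+3)*(L*((S+2)/2 + D))"
    using h1 by (simp add: field_simps)
  then have x1: "X1 = L*((S+2)/2 + D)"
    using P nonzero by simp
  have "P*(S+3)*X2 = P*(S+3)*(L*((S+2)*(S+1)/6 + D*(S+2)/2))"
    using h2 by (simp add: field_simps)
  then have x2: "X2 = L*((S+2)*(S+1)/6 + D*(S+2)/2)"
    using P nonzero by simp
  have "P*(S+3)*X3 = P*(S+3)*(L*((S+2)*(S+1)*S/24 + D*(S+2)*(S+1)/6))"
    using h3 by (simp add: field_simps)
  then have x3: "X3 = L*((S+2)*(S+1)*S/24 + D*(S+2)*(S+1)/6)"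
    using P nonzero by simp
  have "(P*((S+2)*(S+1)/2)*X1 + P*D*(S+2)*X1) - (2*P*(S+3) - P)*X2
      = P*L*(S+2) * (12*D*D - 12*D - (S+1)*(S+4)) / 12"
    unfolding x1 x2 by (simp add: field_simps)
  moreover have "(P*((S+2)*(S+1)/2)*X1 + P*D*(S+2)*X1) - (2*P*(S+3) - P)*X2 = 0"
    using t1 by (simp only: right_minus_eq)
  ultimately have "P*L*(S+2) * (12*D*D - 12*D - (S+1)*(S+4)) / 12 = 0"
    by metis
  then have q1: "12*D*D - 12*D - (S+1)*(S+4) = 0"
    using P L nonzero by simp
  have "(P*((S+1)*S/2)*X2 + P*D*(S+1)*X2) - (3*P*(S+3) - 3*P)*X3
      = P*L*(S+2)*(S+1) * (12*D*D - (2*S+20)*D - S*S - 4*S) / 24"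
    unfolding x2 x3 by (simp add: field_simps)
  moreover have "(P*((S+1)*S/2)*X2 + P*D*(S+1)*X2) - (3*P*(S+3) - 3*P)*X3 = 0"
    using t2 by (simp only: right_minus_eq)
  ultimately have "P*L*(S+2)*(S+1) * (12*D*D - (2*S+20)*D - S*S - 4*S) / 24 = 0"
    by metis
  then have q2: "12*D*D - (2*S+20)*D - S*S - 4*S = 0"
    using P L nonzero by simp
  show False
    using quadratics_no_common_solution[OF S q1 q2] .
qed

lemma eq_linear_if_pderiv_eq_const:
  fixes g :: "complex poly"
  assumes "pderiv g = [:a:]"
  shows "g = [:coeff g 0, a:]"
proof -
  have "pderiv (g - [:coeff g 0, a:]) = 0"
    using assms by (simp add: pderiv_diff pderiv_pCons)
  then have "[:coeff (g - [:coeff g 0, a:]) 0:] = g - [:coeff g 0, a:]"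
    by (intro degree_0_id) (simp add: pderiv_eq_0_iff)
  then show ?thesis
    by simp
qed

subsection \<open>The degree constraints\<close>

context bracket_polys
begin

lemma eq_0_if_c_0_0_eq_0:
  assumes "p \<noteq> 0" "c 0 0 = 0"
  shows "c j b = 0"
proof -
  have "gen_act (c 0) (c j (Suc b)) 0 - gen_act (c j) (c 0 0) (Suc b) = - smult p (c j b)"
    by (subst bracket) simp
  then show ?thesis
    using assms by simp
qed

end

locale nondegenerate_bracket_polys = bracket_polys +
  assumes p_nonzero: "p \<noteq> 0" and c_0_0_nonzero: "c 0 0 \<noteq> 0"
begin

lemma c_0_0_linear: "c 0 0 = [:coeff (c 0 0) 0, p:]"
proof -
  have "gen_act (c 0) (c 0 0) 1 - gen_act (c 0) (c 0 1) 0 = smult p (c 0 0)"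
    by (subst bracket) simp
  then have "pderiv (c 0 0) * c 0 0 = [:p:] * c 0 0"
    by (simp add: gen_act_Suc_0 algebra_simps)
  then have "pderiv (c 0 0) = [:p:]"
    using c_0_0_nonzero mult_right_cancel by blast
  then show ?thesis
    by (rule eq_linear_if_pderiv_eq_const)
qed

text \<open>If N is the top lambda-power of L_0 _lambda v, the bracket of L_0 with itself kills the coefficient
  of lambda^(N + deg c_{0,1}) in L_0 _lambda c_{0,1}(\<partial>) v, which is lc(c_{0,1}) c_{0,N}.\<close>

lemma degree_c_0_1: "degree (c 0 1) = 0"
proof (rule ccontr)
  assume degree: "degree (c 0 1) \<noteq> 0"
  define N where "N = Max {k. c 0 k \<noteq> 0}"
  have "N \<in> {k. c 0 k \<noteq> 0}"
    unfolding N_def using finite_support c_0_0_nonzero by (intro Max_in) auto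
  then have c_N: "c 0 N \<noteq> 0"
    by simp
  have above: "c 0 k = 0" if "N < k" for k
    using Max_ge[OF finite_support, of k 0] that unfolding N_def by (metis mem_Collect_eq not_le)
  define b where "b = N + degree (c 0 1)"
  have "gen_act (c 0) (c 0 b) 1 - gen_act (c 0) (c 0 1) b =
        smult (p * of_nat (b choose b)) (c 0 b) - (if 0 < b then smult (p * of_nat (b choose 1)) (c 0 b) else 0)"
    by (subst bracket) simp
  moreover have "c 0 b = 0"
    using above degree by (simp add: b_def)
  ultimately have "gen_act (c 0) (c 0 1) (N + degree (c 0 1)) = 0"
    by (simp add: b_def)
  then have "[:lead_coeff (c 0 1):] * c 0 N = 0"
    using gen_act_top[of N "c 0"] above by simp
  then show False
    using c_N degree by auto
qed

lemma pderiv_c_mult_c_0_0: "pderiv (c j b) * c 0 0 = smult (of_nat j + p - p * of_nat b) (c j b)"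
proof -
  have "gen_act (c 0) (c j b) 1 - gen_act (c j) (c 0 1) b =
        smult (of_nat j + p) (c j b) - (if 0 < b then smult (p * of_nat b) (c j b) else 0)"
    by (subst bracket) simp
  moreover have "gen_act (c j) (c 0 1) b = c 0 1 * c j b"
    by (rule gen_act_degree_0) (rule degree_c_0_1)
  ultimately show ?thesis
    by (cases "b = 0") (simp_all add: gen_act_Suc_0 algebra_simps smult_diff_left)
qed

lemma degree_c: "c j b \<noteq> 0 \<Longrightarrow> of_nat j + p = p * of_nat (degree (c j b) + b)"
  using eigenvalue_pderiv_mult_linear[of "c j b" "coeff (c 0 0) 0" p] pderiv_c_mult_c_0_0[of j b]
    c_0_0_linear
  by (simp add: algebra_simps)

lemma degree_c_eq:
  assumes "c j b \<noteq> 0" "c j b' \<noteq> 0"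
  shows "degree (c j b) + b = degree (c j b') + b'"
  using degree_c[OF assms(1)] degree_c[OF assms(2)] p_nonzero by (simp del: of_nat_add)

lemma degree_c_0_0: "degree (c 0 0) = 1"
  by (subst c_0_0_linear) (simp add: p_nonzero)

lemma c_0_eq_0:
  assumes "2 \<le> b"
  shows "c 0 b = 0"
proof (rule ccontr)
  assume "c 0 b \<noteq> 0"
  then have "degree (c 0 b) + b = 1"
    using degree_c_eq[of 0 b 0] c_0_0_nonzero degree_c_0_0 by simp
  then show False
    using assms by simp
qed

definition alpha :: complex where
  "alpha = coeff (c 0 0) 0 / p"

definition Delta :: complex where
  "Delta = coeff (c 0 1) 0 / p"

lemma c_0_eq_L0coeffs: "c 0 = L0coeffs p Delta alpha"
proof
  fix k :: nat
  consider "k = 0" | "k = 1" | "2 \<le> k"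
    by arith
  then show "c 0 k = L0coeffs p Delta alpha k"
  proof cases
    case 1
    then show ?thesis
      using c_0_0_linear p_nonzero by (simp add: L0coeffs_def alpha_def)
  next
    case 2
    then show ?thesis
      using degree_0_id[OF degree_c_0_1] p_nonzero by (simp add: L0coeffs_def Delta_def)
  next
    case 3
    then show ?thesis
      using c_0_eq_0 by (simp add: L0coeffs_def)
  qed
qed

lemma gen_act_c_0:
  "gen_act (c 0) g a = taylor g a * [:p * alpha, p:] + (if a = 0 then 0 else taylor g (a - 1) * [:p * Delta:])"
  by (simp add: c_0_eq_L0coeffs gen_act_L0coeffs)

lemma eq_0_if_c_j_0_eq_0:
  assumes "c j 0 = 0" "of_nat j + p \<noteq> 0"
  shows "c j b = 0"
proof -
  have "gen_act (c 0) (c j 0) (Suc b) - gen_act (c j) (c 0 (Suc b)) 0 = smult (of_nat j + p) (c j b)"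
    by (subst bracket) simp
  then show ?thesis
    using assms by simp
qed

lemma bracket_0_j_high:
  assumes "2 \<le> a"
  shows "taylor (c j 0) a * [:p * alpha, p:] + taylor (c j 0) (a - 1) * [:p * Delta:]
           = smult (of_nat j + p) (c j (a - 1))"
proof -
  have "gen_act (c 0) (c j 0) a - gen_act (c j) (c 0 a) 0 = smult (of_nat j + p) (c j (a - 1))"
    by (subst bracket) (use assms in simp)
  then show ?thesis
    using assms by (simp add: gen_act_c_0 c_0_eq_0)
qed

lemma bracket_0_j_2:
  "taylor (c j b) 2 * [:p * alpha, p:] + pderiv (c j b) * [:p * Delta:] =
     smult ((of_nat j + p) * of_nat (Suc b)) (c j (Suc b))
     - (if 0 < b then smult (p * of_nat (Suc b choose 2)) (c j (Suc b)) else 0)"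
proof -
  have "gen_act (c 0) (c j b) 2 - gen_act (c j) (c 0 2) b =
     smult ((of_nat j + p) * of_nat (Suc b)) (c j (Suc b))
     - (if 0 < b then smult (p * of_nat (Suc b choose 2)) (c j (Suc b)) else 0)"
    by (subst bracket) simp
  then show ?thesis
    by (simp add: gen_act_c_0 c_0_eq_0 numeral_2_eq_2)
qed

lemma coeff_c_eq_0:
  assumes "c j 0 \<noteq> 0" "degree (c j 0) < t + b"
  shows "coeff (c j b) t = 0"
proof (cases "c j b = 0")
  case False
  then have "degree (c j b) + b = degree (c j 0)"
    using degree_c_eq[OF False assms(1)] by simp
  then show ?thesis
    using assms(2) by (simp add: coeff_eq_0)
qed simp


lemma top_coeff_bracket_0_j_high:
  assumes "c j 0 \<noteq> 0" "2 \<le> a" "a \<le> degree (c j 0) + 1"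
  shows "p * of_nat (degree (c j 0) choose a) * lead_coeff (c j 0)
           + p * Delta * of_nat (degree (c j 0) choose (a - 1)) * lead_coeff (c j 0)
         = (of_nat j + p) * coeff (c j (a - 1)) (degree (c j 0) + 1 - a)"
proof -
  define n where "n = degree (c j 0)"
  have top: "coeff (taylor (c j 0) a * [:p * alpha, p:]) (n + 1 - a) = p * of_nat (n choose a) * lead_coeff (c j 0)"
  proof (cases "a = n + 1")
    case False
    then have "n + 1 - a = Suc (n - a)" "Suc (n - a) + a = n + 1" "n - a + a = n"
      using assms(3) n_def by auto
    then show ?thesis
      by (simp add: coeff_mult_linear taylor_coeff coeff_eq_0 n_def)
  qed (simp add: coeff_mult_linear taylor_coeff coeff_eq_0 n_def)
  have top_1: "coeff (taylor (c j 0) (a - 1) * [:p * Delta:]) (n + 1 - a)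
      = p * Delta * of_nat (n choose (a - 1)) * lead_coeff (c j 0)"
  proof -
    have "n + 1 - a + (a - 1) = n"
      using assms(2,3) n_def by auto
    then show ?thesis
      by (simp add: taylor_coeff n_def)
  qed
  have "(of_nat j + p) * coeff (c j (a - 1)) (n + 1 - a)
      = coeff (taylor (c j 0) a * [:p * alpha, p:] + taylor (c j 0) (a - 1) * [:p * Delta:]) (n + 1 - a)"
    unfolding bracket_0_j_high[OF assms(2)] by simp
  also have "\<dots> = p * of_nat (n choose a) * lead_coeff (c j 0)
                   + p * Delta * of_nat (n choose (a - 1)) * lead_coeff (c j 0)"
    unfolding coeff_add top top_1 ..
  finally show ?thesis
    unfolding n_def by simp
qed

lemma top_coeff_bracket_0_j_2:
  assumes "c j 0 \<noteq> 0" "degree (c j 0) = Suc t + b"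
  shows "p * of_nat (Suc t choose 2) * coeff (c j b) (Suc t) + p * Delta * of_nat (Suc t) * coeff (c j b) (Suc t)
         = ((of_nat j + p) * of_nat (Suc b) - (if 0 < b then p * of_nat (Suc b choose 2) else 0))
           * coeff (c j (Suc b)) t"
proof -
  have top: "coeff (taylor (c j b) 2 * [:p * alpha, p:]) t = p * of_nat (Suc t choose 2) * coeff (c j b) (Suc t)"
  proof (cases t)
    case 0
    then show ?thesis
      using coeff_c_eq_0[OF assms(1), of 2 b] assms(2)
      by (simp add: coeff_mult_linear taylor_coeff binomial_eq_0 numeral_2_eq_2)
  next
    case (Suc t')
    then show ?thesis
      using coeff_c_eq_0[OF assms(1), of "t + 2" b] assms(2)
      by (simp add: coeff_mult_linear taylor_coeff numeral_2_eq_2)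
  qed
  have top_1: "coeff (pderiv (c j b) * [:p * Delta:]) t = p * Delta * of_nat (Suc t) * coeff (c j b) (Suc t)"
    by (simp add: coeff_pderiv)
  have "coeff (taylor (c j b) 2 * [:p * alpha, p:] + pderiv (c j b) * [:p * Delta:]) t
      = ((of_nat j + p) * of_nat (Suc b) - (if 0 < b then p * of_nat (Suc b choose 2) else 0))
        * coeff (c j (Suc b)) t"
    unfolding bracket_0_j_2 by (simp add: algebra_simps)
  then show ?thesis
    unfolding coeff_add top top_1 .
qed

text \<open>If deg c_{j,0} = s + 3, the top coefficients of c_{j,0}, ..., c_{j,3} would solve the
  overdetermined system of top_coeffs_contradiction.\<close>

lemma degree_c_j_0_le_2:
  assumes "c j 0 \<noteq> 0"
  shows "degree (c j 0) \<le> 2"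
proof (rule ccontr)
  assume "\<not> ?thesis"
  then obtain s where n: "degree (c j 0) = s + 3"
    by (metis add.commute less_eqE not_le numeral_2_eq_2 numeral_3_eq_3 Suc_leI)
  define S where "S = (of_nat s :: complex)"
  define L where "L = lead_coeff (c j 0)"
  define X1 where "X1 = coeff (c j 1) (s + 2)"
  define X2 where "X2 = coeff (c j 2) (s + 1)"
  define X3 where "X3 = coeff (c j 3) s"
  have L: "L \<noteq> 0"
    using assms by (simp add: L_def)
  have weight: "of_nat j + p = p * (S + 3)"
    using degree_c[OF assms] n by (simp add: S_def)
  have h1: "p*((S+3)*(S+2)/2)*L + p*Delta*(S+3)*L = p*(S+3)*X1"
    using top_coeff_bracket_0_j_high[OF assms, of 2] n weight
    by (simp add: of_nat_choose_2 S_def L_def X1_def algebra_simps)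
  have h2: "p*((S+3)*(S+2)*(S+1)/6)*L + p*Delta*((S+3)*(S+2)/2)*L = p*(S+3)*X2"
    using top_coeff_bracket_0_j_high[OF assms, of 3] n weight
    by (simp add: of_nat_choose_2 of_nat_choose_3 S_def L_def X2_def algebra_simps)
  have h3: "p*((S+3)*(S+2)*(S+1)*S/24)*L + p*Delta*((S+3)*(S+2)*(S+1)/6)*L = p*(S+3)*X3"
    using top_coeff_bracket_0_j_high[OF assms, of 4] n weight
    by (simp add: of_nat_choose_3 of_nat_choose_4 S_def L_def X3_def algebra_simps)
  have t1: "p*((S+2)*(S+1)/2)*X1 + p*Delta*(S+2)*X1 = (2*p*(S+3) - p)*X2"
    using top_coeff_bracket_0_j_2[OF assms, of "s + 1" 1, unfolded Suc_1] n weight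
    by (simp add: of_nat_choose_2 S_def X1_def X2_def algebra_simps)
  have t2: "p*((S+1)*S/2)*X2 + p*Delta*(S+1)*X2 = (3*p*(S+3) - 3*p)*X3"
    using top_coeff_bracket_0_j_2[OF assms, of s 2] n weight
    by (simp add: of_nat_choose_2 S_def X2_def X3_def algebra_simps)
  show False
    using top_coeffs_contradiction[OF S_def p_nonzero L h1 h2 h3 t1 t2] .
qed

lemma degree_c_j_0_ne_2:
  assumes "c j 0 \<noteq> 0"
  shows "degree (c j 0) \<noteq> 2"
proof
  assume degree: "degree (c j 0) = 2"
  then have j: "of_nat j = p"
    using degree_c[OF assms] by (simp add: algebra_simps)
  have "c (j + j) 0 = 0"
  proof (rule ccontr)
    assume nonzero: "c (j + j) 0 \<noteq> 0"
    then have "p * of_nat 3 = p * of_nat (degree (c (j + j) 0))"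
      using degree_c[OF nonzero] j by (simp add: algebra_simps)
    then have "degree (c (j + j) 0) = 3"
      using p_nonzero by (metis mult_left_cancel of_nat_eq_iff)
    then show False
      using degree_c_j_0_le_2[OF nonzero] by simp
  qed
  moreover have "gen_act (c j) (c j 0) 1 - gen_act (c j) (c j 1) 0 = smult (of_nat j + p) (c (j + j) 0)"
    by (subst bracket) simp
  ultimately have "pderiv (c j 0) * c j 0 = 0"
    by (simp add: gen_act_Suc_0 algebra_simps)
  then show False
    using assms degree by (simp add: pderiv_eq_0_iff)
qed

lemma c_j_0_eq_0:
  assumes "1 \<le> j" "p \<noteq> - of_nat j"
  shows "c j 0 = 0"
proof (rule ccontr)
  assume nonzero: "c j 0 \<noteq> 0"
  then consider "degree (c j 0) = 0" | "degree (c j 0) = 1"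
    using degree_c_j_0_le_2 degree_c_j_0_ne_2 by fastforce
  then show False
  proof cases
    case 1
    then have "p = - of_nat j"
      using degree_c[OF nonzero] by (simp add: eq_neg_iff_add_eq_0 add.commute)
    then show False
      using assms(2) by simp
  next
    case 2
    then have "of_nat j = (0 :: complex)"
      using degree_c[OF nonzero] by simp
    then show False
      using assms(1) by simp
  qed
qed

lemma c_eq_0_if_weight_nonzero:
  assumes "1 \<le> j" "p \<noteq> - of_nat j"
  shows "c j b = 0"
proof (rule eq_0_if_c_j_0_eq_0)
  show "c j 0 = 0"
    using c_j_0_eq_0[OF assms] .
  show "of_nat j + p \<noteq> 0"
    using assms(2) by (metis add.commute add_eq_0_iff)
qed

lemma c_if_weight_zero:
  assumes "p = - of_nat j" "c j b \<noteq> 0"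
  shows "b = 0 \<and> degree (c j b) = 0"
proof -
  have "p * of_nat (degree (c j b) + b) = 0"
    using degree_c[OF assms(2)] assms(1) by simp
  then show ?thesis
    using p_nonzero by (simp only: mult_eq_0_iff of_nat_eq_0_iff) auto
qed

lemma c_j_0_eq_0_if_weight_zero:
  assumes "p = - of_nat j" "2 \<le> j"
  shows "c j 0 = 0"
proof -
  have "c 1 0 = 0"
    using assms by (intro c_j_0_eq_0) auto
  moreover have "gen_act (c 1) (c (j - 1) 0) 1 - gen_act (c (j - 1)) (c 1 1) 0
      = smult (of_nat (j - 1) + p) (c (1 + (j - 1)) 0)"
    by (subst bracket) simp
  ultimately have "smult (of_nat (j - 1) + p) (c j 0) = 0"
    using assms(2) by (simp add: gen_act_Suc_0)
  moreover have "of_nat (j - 1) + p = -1"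
    using assms by (simp add: of_nat_diff)
  ultimately show ?thesis
    by simp
qed

lemma c_eq_0_unless_L1:
  assumes "1 \<le> j" "\<not> (j = 1 \<and> p = -1)"
  shows "c j b = 0"
proof (cases "p = - of_nat j")
  case True
  then have "2 \<le> j"
    using assms by (cases j) auto
  then show ?thesis
    using c_j_0_eq_0_if_weight_zero[OF True] c_if_weight_zero[OF True] by (cases b) auto
qed (use c_eq_0_if_weight_nonzero assms in blast)

lemma c_1_if_p_minus_1:
  assumes "p = -1"
  shows "c 1 = (\<lambda>b. if b = 0 then [:coeff (c 1 0) 0:] else 0)"
proof
  fix b
  show "c 1 b = (if b = 0 then [:coeff (c 1 0) 0:] else 0)"
    using c_if_weight_zero[of 1 b] assms degree_0_id[of "c 1 0"] by (cases "c 1 b = 0") auto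
qed

end

section \<open>Classification of rank one modules\<close>

lemma rank_one_nondegenerate:
  fixes M :: "('m::ab_group_add) cmod"
  assumes "p \<noteq> 0" "conformal_module p M" "nontrivial_cm M" "free_rank_one M"
  obtains v where "rank_one_cm p M v" "nondegenerate_bracket_polys p (rank_one_cm.act_poly M v)"
proof -
  obtain v where "\<And>x. \<exists>!g. x = polyact M g v"
    using assms(4) unfolding free_rank_one_def by blast
  then interpret rank_one_cm p M v
    by unfold_locales (use assms(2) in auto)
  have "act_poly 0 0 \<noteq> 0"
    using eq_0_if_c_0_0_eq_0[OF assms(1)] act_poly_nontrivial[OF assms(3)] by blast
  then have "nondegenerate_bracket_polys p act_poly"
    using assms(1) by unfold_locales
  then show ?thesis
    using that rank_one_cm_axioms by blast
qed

lemma rank_one_isomorphic_Mda: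
  fixes M :: "('m::ab_group_add) cmod"
  assumes "p \<noteq> 0" "conformal_module p M" "nontrivial_cm M" "free_rank_one M" "p \<noteq> -1"
  shows "\<exists>\<Delta> \<alpha>. cm_isomorphic M (Mda p \<Delta> \<alpha>)"
proof -
  obtain v where "rank_one_cm p M v" "nondegenerate_bracket_polys p (rank_one_cm.act_poly M v)"
    using rank_one_nondegenerate assms(1-4) by blast
  then interpret rank_one_cm p M v + C: nondegenerate_bracket_polys p act_poly
    by simp_all
  have "act (Mda p C.Delta C.alpha) i = gen_act (act_poly i)" for i
  proof (cases "i = 0")
    case False
    then have zero: "act_poly i = (\<lambda>_. 0)"
      using C.c_eq_0_unless_L1 assms(5) by fastforce
    show ?thesis
      using False unfolding zero by (simp add: Mda_def fun_eq_iff)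
  qed (simp add: Mda_def C.c_0_eq_L0coeffs)
  then show ?thesis
    using isomorphic_poly_model[OF poly_model_Mda] by blast
qed

lemma rank_one_isomorphic_Mdab:
  fixes M :: "('m::ab_group_add) cmod"
  assumes "conformal_module (-1) M" "nontrivial_cm M" "free_rank_one M"
  shows "\<exists>\<Delta> \<alpha> \<beta>. cm_isomorphic M (Mdab \<Delta> \<alpha> \<beta>)"
proof -
  obtain v where "rank_one_cm (-1) M v" "nondegenerate_bracket_polys (-1) (rank_one_cm.act_poly M v)"
    using rank_one_nondegenerate assms by (metis neg_equal_0_iff_equal one_neq_zero)
  then interpret rank_one_cm "-1" M v + C: nondegenerate_bracket_polys "-1" act_poly
    by simp_all
  define \<beta> where "\<beta> = coeff (act_poly 1 0) 0"
  have act_poly_1: "act_poly 1 = (\<lambda>b. if b = 0 then [:\<beta>:] else 0)"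
    unfolding \<beta>_def by (rule C.c_1_if_p_minus_1) simp
  have "act (Mdab C.Delta C.alpha \<beta>) i = gen_act (act_poly i)" for i
  proof -
    consider "i = 0" | "i = 1" | "2 \<le> i"
      by arith
    then show ?thesis
    proof cases
      case 3
      then have zero: "act_poly i = (\<lambda>_. 0)"
        using C.c_eq_0_unless_L1 by fastforce
      show ?thesis
        using 3 unfolding zero by (simp add: Mdab_def fun_eq_iff)
    qed (simp_all add: Mdab_def C.c_0_eq_L0coeffs act_poly_1 act_poly_1[unfolded One_nat_def])
  qed
  then show ?thesis
    using isomorphic_poly_model[OF poly_model_Mdab] by blast
qed

theorem theorem4p1:
  fixes p :: complex and M :: "('m::ab_group_add) cmod"
  assumes "p \<noteq> 0"
  shows
   "((conformal_module p M \<and> nontrivial_cm M \<and> free_rank_one M \<and> p \<noteq> -1)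
        \<longrightarrow> (\<exists>\<Delta> \<alpha>. cm_isomorphic M (Mda p \<Delta> \<alpha>)))
    \<and> ((conformal_module p M \<and> nontrivial_cm M \<and> free_rank_one M \<and> p = -1)
        \<longrightarrow> (\<exists>\<Delta> \<alpha> \<beta>. cm_isomorphic M (Mdab \<Delta> \<alpha> \<beta>)))
    \<and> (\<forall>\<Delta> \<alpha>. irreducible_cm (Mda p \<Delta> \<alpha>) \<longleftrightarrow> \<Delta> \<noteq> 0)
    \<and> (\<forall>\<Delta> \<alpha> \<beta>. irreducible_cm (Mdab \<Delta> \<alpha> \<beta>) \<longleftrightarrow> (\<Delta> \<noteq> 0 \<or> \<beta> \<noteq> 0))
    \<and> (\<forall>\<alpha>. let M0 = Mda p 0 \<alpha>; N = range (\<lambda>v. dd M0 v + smul M0 \<alpha> v) in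
          {S. submodule_cm M0 S \<and> S \<noteq> {0} \<and> S \<noteq> UNIV} = {N}
          \<and> (\<exists>f. cm_iso_onto (Mda p 1 \<alpha>) M0 N f))
    \<and> (\<forall>\<alpha>. let M0 = Mdab 0 \<alpha> 0; N = range (\<lambda>v. dd M0 v + smul M0 \<alpha> v) in
          {S. submodule_cm M0 S \<and> S \<noteq> {0} \<and> S \<noteq> UNIV} = {N}
          \<and> (\<exists>f. cm_iso_onto (Mdab 1 \<alpha> 0) M0 N f))"
proof (intro conjI allI impI)
  show "\<exists>\<Delta> \<alpha>. cm_isomorphic M (Mda p \<Delta> \<alpha>)"
    if "conformal_module p M \<and> nontrivial_cm M \<and> free_rank_one M \<and> p \<noteq> -1"
    using rank_one_isomorphic_Mda assms that by blast
  show "\<exists>\<Delta> \<alpha> \<beta>. cm_isomorphic M (Mdab \<Delta> \<alpha> \<beta>)"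
    if "conformal_module p M \<and> nontrivial_cm M \<and> free_rank_one M \<and> p = -1"
    using rank_one_isomorphic_Mdab that by blast
  show "irreducible_cm (Mda p \<Delta> \<alpha>) \<longleftrightarrow> \<Delta> \<noteq> 0" for \<Delta> \<alpha>
    using irreducible_Mda_iff[OF assms] .
  show "irreducible_cm (Mdab \<Delta> \<alpha> \<beta>) \<longleftrightarrow> \<Delta> \<noteq> 0 \<or> \<beta> \<noteq> 0" for \<Delta> \<alpha> \<beta>
    by (rule irreducible_Mdab_iff)
  show "let M0 = Mda p 0 \<alpha>; N = range (\<lambda>v. dd M0 v + smul M0 \<alpha> v) in
          {S. submodule_cm M0 S \<and> S \<noteq> {0} \<and> S \<noteq> UNIV} = {N}
          \<and> (\<exists>f. cm_iso_onto (Mda p 1 \<alpha>) M0 N f)" for \<alpha>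
    unfolding Let_def range_d_plus_Mda
    by (intro conjI exI[of _ "\<lambda>h. h * d_plus \<alpha>"] proper_submodules_Mda_Delta_0[OF assms] Mda_Delta_1_iso)
  show "let M0 = Mdab 0 \<alpha> 0; N = range (\<lambda>v. dd M0 v + smul M0 \<alpha> v) in
          {S. submodule_cm M0 S \<and> S \<noteq> {0} \<and> S \<noteq> UNIV} = {N}
          \<and> (\<exists>f. cm_iso_onto (Mdab 1 \<alpha> 0) M0 N f)" for \<alpha>
    unfolding Let_def Mdab_beta_0 range_d_plus_Mda
    by (intro conjI exI[of _ "\<lambda>h. h * d_plus \<alpha>"] proper_submodules_Mda_Delta_0 Mda_Delta_1_iso) simp
qed

end
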